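(* Under the hypotheses of the preceding setting ($\mathfrak g$ finite-dimensional over $\mathbb F$, $R$ an endomorphism of $\mathfrak g$, $c\in\mathbb F$, $\mathcal R(x,y)=(R(x-y)+cy,R(x-y)+cx)$ an $R$-matrix of $\mathfrak g\times\mathfrak g$), let $H$ be an $\mathrm{Ad}^*$-invariant function on $\mathfrak g^*$, $\lambda\in\mathbb F$, and $\psi_\lambda(\xi,\eta)=\lambda\xi-\eta$. Then for every function $K$ on $\mathfrak g^*\times\mathfrak g^*$ and every $(\xi,\eta)$, writing $u=d_{\lambda\xi-\eta}H\in\mathfrak g$, $$\{K,H\circ\psi_\lambda\}_{\mathcal R}(\xi,\eta)=\frac{1-\lambda}{2}\Big\langle(\xi,\eta),\big[\big((R-cI)u,(R+cI)u\big),\,d_{(\xi,\eta)}K\big]\Big\rangle .$$ In particular, if $\mathfrak g=\mathfrak g_+\oplus\mathfrak g_-$ is a direct sum of two Lie subalgebras and $R=P_+-P_-$ (difference of the corresponding projections; then $c=1$), one has $\{K,H\circ\psi_\lambda\}_{\mathcal R}(\xi,\eta)=(1-\lambda)\big\langle(\xi,\eta),[(-u_-,u_+),d_{(\xi,\eta)}K]\big\rangle$ where $u_\pm=P_\pm u$.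
   Context: $\mathfrak g\times\mathfrak g$ carries the componentwise bracket. $\mathfrak g^*\times\mathfrak g^*$ is identified with $(\mathfrak g\times\mathfrak g)^*$ via $\langle(\xi,\eta),(x,y)\rangle=\langle\xi,x\rangle-\langle\eta,y\rangle$; differentials of functions on $\mathfrak g^*\times\mathfrak g^*$ are elements of $\mathfrak g\times\mathfrak g$ via this pairing, and $d_\xi H\in\mathfrak g$ for $H$ on $\mathfrak g^*$. The Poisson $\mathcal R$-bracket is $\{F,H\}_{\mathcal R}(\xi,\eta)=\tfrac12\langle(\xi,\eta),[\mathcal R\,dF,dH]+[dF,\mathcal R\,dH]\rangle$ (differentials at $(\xi,\eta)$). The left-hand side $\{K,H\circ\psi_\lambda\}_{\mathcal R}$ is the derivative of $K$ along the Hamiltonian vector field of $H\circ\psi_\lambda$. *)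

theory Defs
  imports "HOL-Analysis.Analysis"
begin

text \<open>The Lie algebra g is modelled as 'f^'n (finite-dimensional over the field 'f,
a real normed field such as real or complex, so that differentials make sense);
its dual g* is identified with 'f^'n via the canonical pairing below.\<close>

definition dpair :: "'f::real_normed_field ^ 'n \<Rightarrow> 'f ^ 'n \<Rightarrow> 'f" where
  "dpair \<xi> x = (\<Sum>i\<in>UNIV. \<xi> $ i * x $ i)"

definition pair2 :: "('f::real_normed_field ^ 'n) \<times> ('f ^ 'n) \<Rightarrow> ('f ^ 'n) \<times> ('f ^ 'n) \<Rightarrow> 'f" where
  "pair2 p q = dpair (fst p) (fst q) - dpair (snd p) (snd q)"

definition has_dgrad :: "('f::real_normed_field ^ 'n \<Rightarrow> 'f) \<Rightarrow> 'f ^ 'n \<Rightarrow> 'f ^ 'n \<Rightarrow> bool" where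
  "has_dgrad H u \<xi> \<longleftrightarrow> (H has_derivative (\<lambda>\<alpha>. dpair \<alpha> u)) (at \<xi>)"

definition dgrad :: "('f::real_normed_field ^ 'n \<Rightarrow> 'f) \<Rightarrow> 'f ^ 'n \<Rightarrow> 'f ^ 'n" where
  "dgrad H \<xi> = (THE u. has_dgrad H u \<xi>)"

definition has_dgrad2 :: "(('f::real_normed_field ^ 'n) \<times> ('f ^ 'n) \<Rightarrow> 'f)
    \<Rightarrow> ('f ^ 'n) \<times> ('f ^ 'n) \<Rightarrow> ('f ^ 'n) \<times> ('f ^ 'n) \<Rightarrow> bool" where
  "has_dgrad2 K w p \<longleftrightarrow> (K has_derivative (\<lambda>q. pair2 q w)) (at p)"

definition dgrad2 :: "(('f::real_normed_field ^ 'n) \<times> ('f ^ 'n) \<Rightarrow> 'f)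
    \<Rightarrow> ('f ^ 'n) \<times> ('f ^ 'n) \<Rightarrow> ('f ^ 'n) \<times> ('f ^ 'n)" where
  "dgrad2 K p = (THE w. has_dgrad2 K w p)"

definition pscale :: "'f::real_normed_field \<Rightarrow> ('f ^ 'n) \<times> ('f ^ 'n) \<Rightarrow> ('f ^ 'n) \<times> ('f ^ 'n)" where
  "pscale a p = (a *s fst p, a *s snd p)"

definition f_linear :: "('f \<Rightarrow> 'v \<Rightarrow> 'v) \<Rightarrow> ('v::plus \<Rightarrow> 'v) \<Rightarrow> bool" where
  "f_linear sc f \<longleftrightarrow> (\<forall>x y. f (x + y) = f x + f y) \<and> (\<forall>a x. f (sc a x) = sc a (f x))"

definition lie_algebra :: "('f \<Rightarrow> 'v \<Rightarrow> 'v) \<Rightarrow> ('v::ab_group_add \<Rightarrow> 'v \<Rightarrow> 'v) \<Rightarrow> bool" where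
  "lie_algebra sc br \<longleftrightarrow>
     (\<forall>z. f_linear sc (\<lambda>x. br x z)) \<and> (\<forall>x. f_linear sc (\<lambda>z. br x z)) \<and>
     (\<forall>x. br x x = 0) \<and>
     (\<forall>x y z. br x (br y z) + br y (br z x) + br z (br x y) = 0)"

definition prod_br :: "('g \<Rightarrow> 'g \<Rightarrow> 'g) \<Rightarrow> 'g \<times> 'g \<Rightarrow> 'g \<times> 'g \<Rightarrow> 'g \<times> 'g" where
  "prod_br br p q = (br (fst p) (fst q), br (snd p) (snd q))"

definition is_R_matrix :: "('f::field \<Rightarrow> 'v \<Rightarrow> 'v) \<Rightarrow> ('v::ab_group_add \<Rightarrow> 'v \<Rightarrow> 'v) \<Rightarrow> ('v \<Rightarrow> 'v) \<Rightarrow> bool" where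
  "is_R_matrix sc br Rm \<longleftrightarrow> f_linear sc Rm \<and>
     lie_algebra sc (\<lambda>X Y. sc (1/2) (br (Rm X) Y + br X (Rm Y)))"

definition calR :: "('f::real_normed_field ^ 'n \<Rightarrow> 'f ^ 'n) \<Rightarrow> 'f \<Rightarrow> ('f ^ 'n) \<times> ('f ^ 'n) \<Rightarrow> ('f ^ 'n) \<times> ('f ^ 'n)" where
  "calR R c p = (R (fst p - snd p) + c *s snd p, R (fst p - snd p) + c *s fst p)"

definition poissonR :: "('f::real_normed_field ^ 'n \<Rightarrow> 'f ^ 'n \<Rightarrow> 'f ^ 'n)
    \<Rightarrow> (('f ^ 'n) \<times> ('f ^ 'n) \<Rightarrow> ('f ^ 'n) \<times> ('f ^ 'n))
    \<Rightarrow> (('f ^ 'n) \<times> ('f ^ 'n) \<Rightarrow> 'f) \<Rightarrow> (('f ^ 'n) \<times> ('f ^ 'n) \<Rightarrow> 'f)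
    \<Rightarrow> ('f ^ 'n) \<times> ('f ^ 'n) \<Rightarrow> 'f" where
  "poissonR br Rm F G p = (1/2) * pair2 p
      (prod_br br (Rm (dgrad2 F p)) (dgrad2 G p) + prod_br br (dgrad2 F p) (Rm (dgrad2 G p)))"

text \<open>Ad*-invariance (infinitesimal form): H is differentiable and
  dH vanishes in every coadjoint direction ad*_x xi, i.e. <xi,[x, d_xi H]> = 0.\<close>
definition ad_star_invariant :: "('f::real_normed_field ^ 'n \<Rightarrow> 'f ^ 'n \<Rightarrow> 'f ^ 'n)
    \<Rightarrow> ('f ^ 'n \<Rightarrow> 'f) \<Rightarrow> bool" where
  "ad_star_invariant br H \<longleftrightarrow> (\<forall>\<xi>. \<exists>u. has_dgrad H u \<xi>) \<and>
     (\<forall>\<xi> x. dpair \<xi> (br x (dgrad H \<xi>)) = 0)"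

end

theory Submission imports Defs begin

(*
  Proof idea.  The Poisson R-bracket is computed from the two differentials,
  so the theorem is a first-order computation at the point (xi, eta).

  1. By the chain rule the differential of G = H o psi_lam, psi_lam(xi,eta) = lam xi - eta,
     is (lam u, u) with u = d_{lam xi - eta} H (lemma has_dgrad2_comp_psi).
  2. Ad*-invariance of H at lam xi - eta says <lam xi - eta, [x,u]> = 0 for all x, i.e.
     <eta,[x,u]> = lam <xi,[x,u]>.  Using this, bilinearity and antisymmetry of the
     bracket and linearity of R, the R-bracket of a covector X = (a,b) against (lam u, u)
     collapses to ((1-lam)/2) <(xi,eta), [((R-c)u,(R+c)u), X]>  (lemma calR_bracket_identity).
  3. For R = P+ - P- with c = 1 one has (R-1)u = -2 P- u and (R+1)u = 2 P+ u
     (lemma projection_difference), and the factor 2 is pulled out of the bracket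
     (lemma projection_bracket).
*)

lemma dpair_add_r: "dpair a (x + y) = dpair a x + dpair a y"
  by (simp add: dpair_def distrib_left sum.distrib)

lemma dpair_diff_r: "dpair a (x - y) = dpair a x - dpair a y"
  by (simp add: dpair_def right_diff_distrib sum_subtractf)

lemma dpair_diff_l: "dpair (a - b) x = dpair a x - dpair b x"
  by (simp add: dpair_def left_diff_distrib sum_subtractf)

lemma dpair_neg_r: "dpair a (- x) = - dpair a x"
  by (simp add: dpair_def sum_negf)

lemma dpair_scale_r: "dpair a (c *s x) = c * dpair a x"
  by (simp add: dpair_def sum_distrib_left mult_ac)

lemma dpair_scale_l: "dpair (c *s a) x = c * dpair a x"
  by (simp add: dpair_def sum_distrib_left mult_ac)

text \<open>Pairing with a basis covector extracts a coordinate; hence the pairing is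
  nondegenerate, which makes differentials unique.\<close>
lemma dpair_axis: "dpair (axis i 1) x = x $ i"
  by (simp add: dpair_def axis_def if_distrib[of "\<lambda>t. t * _"] sum.delta cong: if_cong)

text \<open>Since dgrad and dgrad2 are defined by a definite description, an explicit
  differential identifies them.\<close>
lemma dgrad_eqI:
  assumes "has_dgrad H u \<xi>"
  shows "dgrad H \<xi> = u"
proof -
  have "v = u" if "has_dgrad H v \<xi>" for v
  proof -
    have "(\<lambda>\<alpha>. dpair \<alpha> v) = (\<lambda>\<alpha>. dpair \<alpha> u)"
      using has_derivative_unique that assms unfolding has_dgrad_def by blast
    then show ?thesis by (metis vec_eq_iff dpair_axis)
  qed
  then show ?thesis unfolding dgrad_def using assms by blast
qed

lemma dgrad2_eqI:
  assumes "has_dgrad2 K w p"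
  shows "dgrad2 K p = w"
proof -
  have "v = w" if "has_dgrad2 K v p" for v
  proof -
    have e: "pair2 q v = pair2 q w" for q
      using has_derivative_unique that assms unfolding has_dgrad2_def by metis
    have "fst v $ i = fst w $ i" for i
      using e[of "(axis i 1, 0)"] by (simp add: pair2_def dpair_axis, simp add: dpair_def)
    moreover have "snd v $ i = snd w $ i" for i
      using e[of "(0, axis i 1)"] by (simp add: pair2_def dpair_axis, simp add: dpair_def)
    ultimately show ?thesis by (simp add: prod_eq_iff vec_eq_iff)
  qed
  then show ?thesis unfolding dgrad2_def using assms by blast
qed

lemma poissonR_eq:
  assumes "has_dgrad2 F dF p" and "has_dgrad2 G dG p"
  shows "poissonR br Rm F G p
           = (1/2) * pair2 p (prod_br br (Rm dF) dG + prod_br br dF (Rm dG))"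
  unfolding poissonR_def dgrad2_eqI[OF assms(1)] dgrad2_eqI[OF assms(2)] ..

lemma bounded_linear_vector_scalar_mult:
  "bounded_linear (\<lambda>x::'f::real_normed_field^'n. lam *s x)"
proof (rule bounded_linear_intro[where K = "norm lam"])
  show "norm (lam *s x) \<le> norm x * norm lam" for x :: "'f^'n"
    unfolding norm_vec_def by (simp add: norm_mult L2_set_right_distrib mult.commute)
qed (auto simp: vector_add_ldistrib scalar_mult_eq_scaleR vec_eq_iff)

text \<open>If H has differential u at lam xi - eta, then (xi,eta) \<mapsto> H(lam xi - eta) has
  differential (lam u, u); the sign of the second component is absorbed by the
  minus sign in the pairing on g* x g*.\<close>
lemma has_dgrad2_comp_psi:
  assumes "has_dgrad H u (lam *s \<xi> - \<eta>)"
  shows "has_dgrad2 (\<lambda>p. H (lam *s fst p - snd p)) (lam *s u, u) (\<xi>, \<eta>)"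
proof -
  have psi: "((\<lambda>p. lam *s fst p - snd p) has_derivative (\<lambda>q. lam *s fst q - snd q)) (at (\<xi>, \<eta>))"
    by (intro has_derivative_diff bounded_linear.has_derivative[OF bounded_linear_vector_scalar_mult]
        has_derivative_fst has_derivative_snd has_derivative_ident)
  have "((\<lambda>p. H (lam *s fst p - snd p)) has_derivative
          (\<lambda>q. dpair (lam *s fst q - snd q) u)) (at (\<xi>, \<eta>))"
    using has_derivative_compose[OF psi] assms unfolding has_dgrad_def by simp
  moreover have "dpair (lam *s fst q - snd q) u = pair2 q (lam *s u, u)" for q
    by (simp add: pair2_def dpair_diff_l dpair_scale_l dpair_scale_r)
  ultimately show ?thesis unfolding has_dgrad2_def by simp
qed

lemma lie_algebra_rules:
  assumes "lie_algebra sc br"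
  shows "br (x + y) z = br x z + br y z" "br x (y + z) = br x y + br x z"
    "br (sc a x) z = sc a (br x z)" "br x (sc a z) = sc a (br x z)"
    "br (x - y) z = br x z - br y z" "br x (y - z) = br x y - br x z"
    "br (- x) z = - br x z" "br x (- z) = - br x z"
    "br y x = - br x y"
proof -
  have left: "f_linear sc (\<lambda>x. br x z)" and right: "f_linear sc (\<lambda>z. br x z)"
    and alt: "br x x = 0" for x z
    using assms unfolding lie_algebra_def by blast+
  have add_l: "br (x + y) z = br x z + br y z" and add_r: "br x (y + z) = br x y + br x z" for x y z
    using left right unfolding f_linear_def by blast+
  show "br (sc a x) z = sc a (br x z)" "br x (sc a z) = sc a (br x z)"
    using left right unfolding f_linear_def by blast+
  have zero_l: "br 0 z = 0" and zero_r: "br x 0 = 0" for x z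
    using add_l[of 0 0 z] add_r[of x 0 0] by simp_all
  have neg_l: "br (- x) z = - br x z" for x z
    using add_l[of x "- x" z] zero_l by (simp add: eq_neg_iff_add_eq_0 add.commute)
  have neg_r: "br x (- z) = - br x z" for x z
    using add_r[of x z "- z"] zero_r by (simp add: eq_neg_iff_add_eq_0 add.commute)
  show "br (x - y) z = br x z - br y z" "br x (y - z) = br x y - br x z"
    using add_l[of x "- y" z] add_r[of x y "- z"] neg_l neg_r by simp_all
  have "br x x + br y x + (br x y + br y y) = 0"
    using alt[of "x + y"] by (simp only: add_l add_r)
  then have "br x y + br y x = 0"
    by (simp add: alt add.commute)
  then show "br y x = - br x y"
    by (simp add: eq_neg_iff_add_eq_0 add.commute)
  show "br x (y + z) = br x y + br x z" "br (x + y) z = br x z + br y z"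
    "br (- x) z = - br x z" "br x (- z) = - br x z"
    by (fact add_r add_l neg_l neg_r)+
qed

lemma f_linear_rules:
  assumes "f_linear sc (R :: 'v::ab_group_add \<Rightarrow> 'v)"
  shows "R (x + y) = R x + R y" "R (sc a x) = sc a (R x)" "R (x - y) = R x - R y"
proof -
  show add: "R (x + y) = R x + R y" for x y using assms unfolding f_linear_def by blast
  show "R (sc a x) = sc a (R x)" using assms unfolding f_linear_def by blast
  have "R 0 = 0" using add[of 0 0] by simp
  then have "R (- y) = - R y" using add[of y "- y"] by (simp add: eq_neg_iff_add_eq_0 add.commute)
  then show "R (x - y) = R x - R y" using add[of x "- y"] by simp
qed

text \<open>Ad*-invariance at lam xi - eta transfers the pairing with eta to a multiple of
  the pairing with xi; together with the shape of calR this turns the R-bracket of any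
  X = (a,b) with the differential (lam u, u) into a single bracket with
  ((R - c)u, (R + c)u).\<close>
lemma calR_bracket_identity:
  fixes br :: "'f::real_normed_field ^ 'n \<Rightarrow> 'f ^ 'n \<Rightarrow> 'f ^ 'n"
  assumes lie: "lie_algebra (*s) br" and Rlin: "f_linear (*s) R"
    and inv: "\<And>x. dpair (lam *s \<xi> - \<eta>) (br x u) = 0"
  shows "(1/2) * pair2 (\<xi>, \<eta>) (prod_br br (calR R c X) (lam *s u, u)
            + prod_br br X (calR R c (lam *s u, u)))
       = ((1 - lam) / 2) * pair2 (\<xi>, \<eta>) (prod_br br (R u - c *s u, R u + c *s u) X)"
proof -
  note B = lie_algebra_rules[OF lie]
  have eta_shift: "dpair \<eta> (br x u) = lam * dpair \<xi> (br x u)" for x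
    using inv[of x] by (simp add: dpair_diff_l dpair_scale_l)
  have swap: "br (R u) y = - br y (R u)" "br u y = - br y u" for y
    by (fact B(9))+
  show ?thesis
    unfolding pair2_def prod_br_def calR_def
    by (simp add: swap B(1-8) f_linear_rules[OF Rlin] dpair_add_r dpair_diff_r
        dpair_neg_r dpair_scale_r eta_shift) (simp add: algebra_simps)
qed

lemma projection_difference:
  fixes u :: "'f::real_normed_field ^ 'n"
  assumes "\<And>x. Pp x + Pm x = x" and "\<And>x. R x = Pp x - Pm x"
  shows "R u - 1 *s u = 2 *s (- Pm u)" "R u + 1 *s u = 2 *s Pp u"
proof -
  have u: "1 *s u = Pp u + Pm u" using assms(1)[of u] by simp
  show "R u - 1 *s u = 2 *s (- Pm u)" "R u + 1 *s u = 2 *s Pp u"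
    unfolding u assms(2) by (simp_all add: vec_eq_iff algebra_simps)
qed

lemma pair2_prod_br_scale:
  assumes "lie_algebra (*s) br"
  shows "pair2 p (prod_br br (a *s x, a *s y) w) = a * pair2 p (prod_br br (x, y) w)"
  by (simp add: pair2_def prod_br_def lie_algebra_rules(3)[OF assms] dpair_scale_r
      right_diff_distrib)

lemma projection_bracket:
  fixes u :: "'f::real_normed_field ^ 'n"
  assumes lie: "lie_algebra (*s) br"
    and "\<And>x. Pp x + Pm x = x" and "\<And>x. R x = Pp x - Pm x"
  shows "((1 - lam) / 2) * pair2 p (prod_br br (R u - 1 *s u, R u + 1 *s u) w)
           = (1 - lam) * pair2 p (prod_br br (- Pm u, Pp u) w)"
proof -
  have "((1 - lam) / 2) * pair2 p (prod_br br (R u - 1 *s u, R u + 1 *s u) w)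
      = ((1 - lam) / 2) * pair2 p (prod_br br (2 *s (- Pm u), 2 *s Pp u) w)"
    unfolding projection_difference[OF assms(2,3)] ..
  also have "\<dots> = (1 - lam) * pair2 p (prod_br br (- Pm u, Pp u) w)"
    unfolding pair2_prod_br_scale[OF lie] by simp
  finally show ?thesis .
qed

theorem theorem2p3:
  fixes br :: "'f::real_normed_field ^ 'n \<Rightarrow> 'f ^ 'n \<Rightarrow> 'f ^ 'n"
    and R :: "'f ^ 'n \<Rightarrow> 'f ^ 'n" and c lam :: 'f
    and H :: "'f ^ 'n \<Rightarrow> 'f"
    and K :: "('f ^ 'n) \<times> ('f ^ 'n) \<Rightarrow> 'f"
    and \<xi> \<eta> :: "'f ^ 'n"
  assumes lie: "lie_algebra (*s) br"
    and Rlin: "f_linear (*s) R"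
    and Rmat: "is_R_matrix pscale (prod_br br) (calR R c)"
    and Hinv: "ad_star_invariant br H"
    and Kdiff: "\<exists>w. has_dgrad2 K w (\<xi>, \<eta>)"
  shows "poissonR br (calR R c) K (\<lambda>p. H (lam *s fst p - snd p)) (\<xi>, \<eta>)
           = ((1 - lam) / 2) * pair2 (\<xi>, \<eta>)
               (prod_br br (R (dgrad H (lam *s \<xi> - \<eta>)) - c *s dgrad H (lam *s \<xi> - \<eta>),
                            R (dgrad H (lam *s \<xi> - \<eta>)) + c *s dgrad H (lam *s \<xi> - \<eta>))
                           (dgrad2 K (\<xi>, \<eta>)))
       \<and> (\<forall>gp gm Pp Pm.
            vec.subspace gp \<and> vec.subspace gm
            \<and> (\<forall>x\<in>gp. \<forall>y\<in>gp. br x y \<in> gp) \<and> (\<forall>x\<in>gm. \<forall>y\<in>gm. br x y \<in> gm)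
            \<and> gp \<inter> gm = {0}
            \<and> (\<forall>x. Pp x \<in> gp \<and> Pm x \<in> gm \<and> Pp x + Pm x = x)
            \<and> (\<forall>x. R x = Pp x - Pm x) \<and> c = 1
          \<longrightarrow> poissonR br (calR R c) K (\<lambda>p. H (lam *s fst p - snd p)) (\<xi>, \<eta>)
              = (1 - lam) * pair2 (\<xi>, \<eta>)
                  (prod_br br (- Pm (dgrad H (lam *s \<xi> - \<eta>)), Pp (dgrad H (lam *s \<xi> - \<eta>)))
                              (dgrad2 K (\<xi>, \<eta>))))"
    (is "?main \<and> ?split")
proof -
  define u where "u = dgrad H (lam *s \<xi> - \<eta>)"
  obtain w where w: "has_dgrad2 K w (\<xi>, \<eta>)" using Kdiff by blast
  have hu: "has_dgrad H u (lam *s \<xi> - \<eta>)"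
    using Hinv dgrad_eqI unfolding ad_star_invariant_def u_def by metis
  have inv: "\<And>x. dpair (lam *s \<xi> - \<eta>) (br x u) = 0"
    using Hinv unfolding ad_star_invariant_def u_def by blast
  have bracket: "poissonR br (calR R c) K (\<lambda>p. H (lam *s fst p - snd p)) (\<xi>, \<eta>)
      = ((1 - lam) / 2) * pair2 (\<xi>, \<eta>) (prod_br br (R u - c *s u, R u + c *s u) w)"
    unfolding poissonR_eq[OF w has_dgrad2_comp_psi[OF hu]]
    by (rule calR_bracket_identity[OF lie Rlin inv])
  show ?thesis
  proof
    show ?main using bracket unfolding dgrad2_eqI[OF w] u_def .
    show ?split
    proof (intro allI impI, elim conjE)
      fix gp gm Pp Pm
      assume proj: "\<forall>x. Pp x \<in> gp \<and> Pm x \<in> gm \<and> Pp x + Pm x = x"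
        and R_eq: "\<forall>x. R x = Pp x - Pm x" and c_eq: "c = 1"
      have sum_id: "\<And>x. Pp x + Pm x = x" using proj by simp
      show "poissonR br (calR R c) K (\<lambda>p. H (lam *s fst p - snd p)) (\<xi>, \<eta>)
          = (1 - lam) * pair2 (\<xi>, \<eta>)
              (prod_br br (- Pm (dgrad H (lam *s \<xi> - \<eta>)), Pp (dgrad H (lam *s \<xi> - \<eta>)))
                          (dgrad2 K (\<xi>, \<eta>)))"
        unfolding c_eq dgrad2_eqI[OF w] u_def[symmetric]
        using bracket[unfolded c_eq] projection_bracket[OF lie sum_id R_eq[rule_format]]
        by (rule trans)
    qed
  qed
qed

end
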